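(* Consider the nonautonomous TASEP with $n$ sites and rate functions $\lambda_0,\dots,\lambda_n$, with associated NRDS $\phi$ on state space $X=\{0,1\}^n$. Suppose that on an interval $I=[t_0,t)$ the $n+1$ Poisson processes have joint $(r,R,m)$-bounded rates with $m=n(n+1)/2$ and $R>r>0$. Then there exists $\delta=\delta(r,R,n)>0$ such that $\mathbb{P}(\Gamma(t,t_0))\ge\delta$, where $\Gamma(t,t_0):=\{\omega\mid\phi(t,t_0,x_1,\omega)=\phi(t,t_0,x_2,\omega)\text{ for all }x_1,x_2\in X\}$.
   Context: Nonautonomous TASEP: $n$ sites; locally integrable rate functions $\lambda_k:\mathbb{R}\to[0,\infty)$, $k=0,\dots,n$, each with $\int_0^t\lambda_k\to\pm\infty$ as $t\to\pm\infty$; to each $k$ an independent non-homogeneous Poisson process on $\mathbb{R}$ with rate $\lambda_k$ (the image of its points under $M_k(t)=\int_0^t\lambda_k$ is a homogeneous rate-1 Poisson process on $\mathbb{R}$). Almost surely all points of all processes are distinct without accumulation; ordering them gives jump times $t_i(\omega)$ increasing in $i\in\mathbb{Z}$ and sites $k_i(\omega)\in\{0,\dots,n\}$. State $x=(s_1,\dots,s_n)\in X=\{0,1\}^n$ ($s_j=1$ iff site $j$ occupied). Single-jump map: $f(x,0)=(1,s_2,\dots,s_n)$; $f(x,n)=(s_1,\dots,s_{n-1},0)$; for $0<k<n$ with $s_k=1,s_{k+1}=0$, $f(x,k)$ sets $s_k=0,s_{k+1}=1$; otherwise $f(x,k)=x$. The NRDS: $\phi(t,t_0,x,\omega)$ is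 obtained from $x$ by applying successively $f(\cdot,k_i(\omega))$ for all $i$ with $t_i(\omega)\in[t_0,t)$ in increasing order of $i$ (and equals $x$ if there is no such $i$). Joint $(r,R,m)$-bounded rates on $[\tau_1,\tau_2)$: there exist $\tau_1=q_0<\dots<q_m=\tau_2$ with $r\le\int_{q_i}^{q_{i+1}}\lambda_k\le R$ for all $i=0,\dots,m-1$, $k=0,\dots,n$. *)

theory Defs
  imports "HOL-Analysis.Analysis" "HOL-Probability.Probability"
begin

text \<open>States of the TASEP with n sites: boolean lists of length n;
  entry j-1 (0-based) is True iff site j is occupied.\<close>

definition tasep_states :: "nat \<Rightarrow> bool list set" where
  "tasep_states n = {x. length x = n}"

definition tasep_jump :: "nat \<Rightarrow> bool list \<Rightarrow> nat \<Rightarrow> bool list" where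
  "tasep_jump n x k =
     (if k = 0 then x[0 := True]
      else if k = n then x[n - 1 := False]
      else if k < n \<and> x ! (k - 1) \<and> \<not> x ! k then x[k - 1 := False, k := True]
      else x)"

text \<open>A sample point: \<omega> k is the set of points of the k-th Poisson process (k = 0..n).\<close>
type_synonym config = "nat \<Rightarrow> real set"

definition jump_times :: "nat \<Rightarrow> config \<Rightarrow> real \<Rightarrow> real \<Rightarrow> real set" where
  "jump_times n \<omega> t0 t = (\<Union>k\<in>{0..n}. \<omega> k \<inter> {t0..<t})"

definition jump_site :: "nat \<Rightarrow> config \<Rightarrow> real \<Rightarrow> nat" where
  "jump_site n \<omega> s = (THE k. k \<le> n \<and> s \<in> \<omega> k)"

text \<open>The NRDS \<phi>(t,t0,x,\<omega>): apply the jumps with times in [t0,t) in increasing order.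
  (Well defined whenever the points are distinct and locally finite, which holds a.s.)\<close>
definition tasep_phi :: "nat \<Rightarrow> real \<Rightarrow> real \<Rightarrow> bool list \<Rightarrow> config \<Rightarrow> bool list" where
  "tasep_phi n t t0 x \<omega> =
     fold (\<lambda>s y. tasep_jump n y (jump_site n \<omega> s))
          (sorted_list_of_set (jump_times n \<omega> t0 t)) x"

definition synchronised :: "nat \<Rightarrow> real \<Rightarrow> real \<Rightarrow> config set" where
  "synchronised n t t0 = {\<omega>. \<forall>x1\<in>tasep_states n. \<forall>x2\<in>tasep_states n.
       tasep_phi n t t0 x1 \<omega> = tasep_phi n t t0 x2 \<omega>}"

definition admissible_rates :: "nat \<Rightarrow> (nat \<Rightarrow> real \<Rightarrow> real) \<Rightarrow> bool" where
  "admissible_rates n lam \<longleftrightarrow> (\<forall>k\<le>n.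
      (\<forall>s. 0 \<le> lam k s) \<and>
      (\<forall>a b. lam k integrable_on {a..b}) \<and>
      filterlim (\<lambda>t. integral {0..t} (lam k)) at_top at_top \<and>
      filterlim (\<lambda>t. integral {t..0} (lam k)) at_top at_bot)"

definition poisson_processes :: "nat \<Rightarrow> (nat \<Rightarrow> real \<Rightarrow> real) \<Rightarrow> config measure \<Rightarrow> bool" where
  "poisson_processes n lam M \<longleftrightarrow>
     prob_space M \<and>
     (\<forall>k\<le>n. \<forall>a b. AE \<omega> in M. finite (\<omega> k \<inter> {a..<b})) \<and>
     (\<forall>k\<le>n. \<forall>a b. a \<le> b \<longrightarrow>
        (\<lambda>\<omega>. card (\<omega> k \<inter> {a..<b})) \<in> measurable M (count_space UNIV) \<and>
        (\<forall>j::nat. measure M {\<omega> \<in> space M. card (\<omega> k \<inter> {a..<b}) = j} =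
             (integral {a..b} (lam k)) ^ j / fact j * exp (- integral {a..b} (lam k)))) \<and>
     (\<forall>J::(nat \<times> real \<times> real) set. finite J \<longrightarrow>
        (\<forall>(k,a,b)\<in>J. k \<le> n \<and> a \<le> b) \<longrightarrow>
        (\<forall>(k,a,b)\<in>J. \<forall>(k',a',b')\<in>J. (k,a,b) \<noteq> (k',a',b') \<longrightarrow> k = k' \<longrightarrow>
              {a..<b} \<inter> {a'..<b'} = {}) \<longrightarrow>
        prob_space.indep_vars M (\<lambda>_. count_space UNIV)
          (\<lambda>(k,a,b) \<omega>. card (\<omega> k \<inter> {a..<b})) J)"

definition joint_bounded_rates ::
  "nat \<Rightarrow> (nat \<Rightarrow> real \<Rightarrow> real) \<Rightarrow> real \<Rightarrow> real \<Rightarrow> nat \<Rightarrow> real \<Rightarrow> real \<Rightarrow> bool" where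
  "joint_bounded_rates n lam r R m tau1 tau2 \<longleftrightarrow>
     (\<exists>q::nat \<Rightarrow> real. q 0 = tau1 \<and> q m = tau2 \<and> (\<forall>i<m. q i < q (Suc i)) \<and>
        (\<forall>i<m. \<forall>k\<le>n. r \<le> integral {q i..q (Suc i)} (lam k) \<and>
                         integral {q i..q (Suc i)} (lam k) \<le> R))"

end

theory Submission
  imports Defs
begin

(* Split [t0, t) into the m = n(n+1)/2 windows of the rate bounds and consider the word
   sweep n = [0..<n] @ [0..<n-1] @ ... @ [0..<1] of jump sites: its block [0..<j] pushes a
   particle into site j, so the word fills every site from any initial state. If window i
   contains exactly one point, and it belongs to the process indexed by the i-th letter of
   the word, then the NRDS applies this word to every initial state, and all trajectories
   end in the full state. Each of the m(n+1) window counts takes its prescribed value 0 or 1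
   with probability at least min r 1 * exp (-R), and the counts are independent, so
   delta = (min r 1 * exp (-R)) ^ (m(n+1)) works. *)

definition apply_jumps :: "nat \<Rightarrow> nat list \<Rightarrow> bool list \<Rightarrow> bool list" where
  "apply_jumps n ks x = fold (\<lambda>k y. tasep_jump n y k) ks x"

lemma apply_jumps_Nil [simp]: "apply_jumps n [] x = x"
  by (simp add: apply_jumps_def)

lemma apply_jumps_append [simp]:
  "apply_jumps n (ks @ ls) x = apply_jumps n ls (apply_jumps n ks x)"
  by (simp add: apply_jumps_def)

lemma apply_jumps_single [simp]: "apply_jumps n [k] x = tasep_jump n x k"
  by (simp add: apply_jumps_def)

lemma length_tasep_jump [simp]: "length (tasep_jump n x k) = length x"
  by (simp add: tasep_jump_def)

lemma length_apply_jumps [simp]: "length (apply_jumps n ks x) = length x"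
  by (induction ks arbitrary: x) (simp_all add: apply_jumps_def)

lemma apply_jumps_upt:
  assumes "0 < j" "j \<le> n" "length x = n"
  shows "apply_jumps n [0..<j] x ! (j - 1) \<and> (\<forall>p\<in>{j..<n}. apply_jumps n [0..<j] x ! p = x ! p)"
  using assms
proof (induction j rule: nat_induct_non_zero)
  case 1
  then show ?case by (auto simp: tasep_jump_def)
next
  case (Suc j)
  then show ?case by (auto simp: tasep_jump_def nth_list_update)
qed

fun sweep :: "nat \<Rightarrow> nat list" where
  "sweep 0 = []"
| "sweep (Suc j) = [0..<Suc j] @ sweep j"

lemma length_sweep: "length (sweep j) = j * (j + 1) div 2"
  by (induction j) auto

lemma set_sweep: "set (sweep j) \<subseteq> {..<j}"
  by (induction j) auto

lemma apply_jumps_sweep: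
  assumes "j \<le> n" "length x = n" "\<forall>p\<in>{j..<n}. x ! p"
  shows "apply_jumps n (sweep j) x = replicate n True"
  using assms
proof (induction j arbitrary: x)
  case 0
  then show ?case by (simp add: list_eq_iff_nth_eq)
next
  case (Suc j)
  let ?y = "apply_jumps n [0..<Suc j] x"
  have "?y ! j" "\<forall>p\<in>{Suc j..<n}. ?y ! p = x ! p"
    using apply_jumps_upt[of "Suc j" n x] Suc.prems by auto
  then have "\<forall>p\<in>{j..<n}. ?y ! p"
    using Suc.prems(3) by (metis atLeastLessThan_iff le_antisym not_less_eq_eq)
  then have "apply_jumps n (sweep j) ?y = replicate n True"
    using Suc by simp
  then show ?case by (simp only: sweep.simps apply_jumps_append)
qed

lemma partition_less:
  fixes q :: "nat \<Rightarrow> 'a::order"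
  assumes "\<forall>i<m. q i < q (Suc i)" "i < j" "j \<le> m"
  shows "q i < q j"
  using assms(2,3)
proof (induction j)
  case (Suc j)
  then show ?case using assms(1) by (auto simp: less_Suc_eq intro: order.strict_trans)
qed simp

lemma partition_le:
  fixes q :: "nat \<Rightarrow> 'a::order"
  assumes "\<forall>i<m. q i < q (Suc i)" "i \<le> j" "j \<le> m"
  shows "q i \<le> q j"
  using partition_less[OF assms(1)] assms(2,3) by (cases "i = j") (auto intro: less_imp_le)

lemma partition_UN:
  fixes q :: "nat \<Rightarrow> 'a::linorder"
  assumes "\<forall>i<m. q i < q (Suc i)"
  shows "{q 0..<q m} = (\<Union>i<m. {q i..<q (Suc i)})"
  using assms
proof (induction m)
  case (Suc m)
  have "q 0 \<le> q m" "q m < q (Suc m)"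
    using partition_le[OF Suc.prems, of 0 m] Suc.prems by auto
  then have "{q 0..<q (Suc m)} = {q 0..<q m} \<union> {q m..<q (Suc m)}" by auto
  then show ?case using Suc by (simp add: lessThan_Suc Un_commute)
qed simp

lemma partition_disjoint:
  fixes q :: "nat \<Rightarrow> 'a::linorder"
  assumes "\<forall>i<m. q i < q (Suc i)" "i < m" "j < m" "i \<noteq> j"
  shows "{q i..<q (Suc i)} \<inter> {q j..<q (Suc j)} = {}"
proof -
  have "{q i..<q (Suc i)} \<inter> {q j..<q (Suc j)} = {}" if "i < j" "j < m" for i j
    using partition_le[OF assms(1), of "Suc i" j] that by auto
  then show ?thesis using assms(2-4) by (metis Int_commute linorder_neqE_nat)
qed

context
  fixes n m :: nat and q p :: "nat \<Rightarrow> real" and w :: "nat list" and \<omega> :: config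
  assumes partition: "\<forall>i<m. q i < q (Suc i)"
    and word: "set w \<subseteq> {..n}" "length w = m"
    and single_points: "\<And>i k. i < m \<Longrightarrow> k \<le> n \<Longrightarrow>
           \<omega> k \<inter> {q i..<q (Suc i)} = (if k = w ! i then {p i} else {})"
begin

lemma word_nth_le: "i < m \<Longrightarrow> w ! i \<le> n"
  using word nth_mem by fastforce

lemma single_point_in_window:
  assumes "i < m"
  shows "p i \<in> \<omega> (w ! i)" "q i \<le> p i" "p i < q (Suc i)"
  using single_points[OF assms word_nth_le[OF assms]] by auto

lemma jump_times_single_points: "jump_times n \<omega> (q 0) (q m) = p ` {..<m}"
proof (intro equalityI subsetI)
  fix s assume "s \<in> jump_times n \<omega> (q 0) (q m)"
  then obtain k i where ki: "k \<le> n" "i < m" and "s \<in> \<omega> k \<inter> {q i..<q (Suc i)}"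
    unfolding jump_times_def partition_UN[OF partition] by auto
  then have "s = p i"
    unfolding single_points[OF ki(2,1)] by (simp split: if_splits)
  then show "s \<in> p ` {..<m}"
    using ki by simp
next
  fix s assume "s \<in> p ` {..<m}"
  then obtain i where "i < m" "s = p i" by auto
  moreover have "q 0 \<le> q i" "q (Suc i) \<le> q m"
    using partition_le[OF partition, of 0 i] partition_le[OF partition, of "Suc i" m] \<open>i < m\<close>
    by simp_all
  ultimately show "s \<in> jump_times n \<omega> (q 0) (q m)"
    unfolding jump_times_def using single_point_in_window[of i] word_nth_le[of i] by fastforce
qed

lemma sorted_jump_times_single_points:
  "sorted_list_of_set (jump_times n \<omega> (q 0) (q m)) = map p [0..<m]"
proof -
  have "p i < p j" if "i < j" "j < m" for i j
  proof -
    have "q (Suc i) \<le> q j"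
      using partition_le[OF partition, of "Suc i" j] that by simp
    then show ?thesis
      using single_point_in_window[of i] single_point_in_window[of j] that by simp
  qed
  then have "sorted_wrt (<) (map p [0..<m])"
    by (simp add: sorted_wrt_iff_nth_less)
  then have "sorted_list_of_set (set (map p [0..<m])) = map p [0..<m]"
    using sorted_list_of_set.idem_if_sorted_distinct strict_sorted_iff by blast
  then show ?thesis
    by (simp add: jump_times_single_points lessThan_atLeast0)
qed

lemma jump_site_single_points:
  assumes "i < m"
  shows "jump_site n \<omega> (p i) = w ! i"
  unfolding jump_site_def
proof (rule the_equality)
  fix k assume k: "k \<le> n \<and> p i \<in> \<omega> k"
  then have "p i \<in> \<omega> k \<inter> {q i..<q (Suc i)}"
    using single_point_in_window[OF assms] by simp
  then show "k = w ! i"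
    using single_points[OF assms, of k] k by (simp split: if_splits)
qed (use word_nth_le single_point_in_window assms in simp)

lemma tasep_phi_single_points: "tasep_phi n (q m) (q 0) x \<omega> = apply_jumps n w x"
proof -
  have "tasep_phi n (q m) (q 0) x \<omega> = fold (\<lambda>i y. tasep_jump n y (w ! i)) [0..<m] x"
    unfolding tasep_phi_def sorted_jump_times_single_points fold_map
    by (rule fold_cong) (auto simp: jump_site_single_points)
  also have "\<dots> = apply_jumps n (map ((!) w) [0..<m]) x"
    by (simp add: apply_jumps_def fold_map comp_def)
  also have "\<dots> = apply_jumps n w x"
    using word(2) map_nth[of w] by simp
  finally show ?thesis .
qed

end

lemma tasep_phi_one_jump_per_window:
  assumes partition: "\<forall>i<m. q i < q (Suc i)"
    and word: "set w \<subseteq> {..n}" "length w = m"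
    and counts: "\<And>i k. i < m \<Longrightarrow> k \<le> n \<Longrightarrow> finite (\<omega> k \<inter> {q i..<q (Suc i)}) \<and>
                   card (\<omega> k \<inter> {q i..<q (Suc i)}) = (if k = w ! i then 1 else 0)"
  shows "tasep_phi n (q m) (q 0) x \<omega> = apply_jumps n w x"
proof -
  have "\<exists>s. \<omega> (w ! i) \<inter> {q i..<q (Suc i)} = {s}" if "i < m" for i
  proof -
    have "w ! i \<le> n"
      using word that nth_mem by fastforce
    then show ?thesis
      using counts[OF that, of "w ! i"] by (simp add: card_1_singleton_iff)
  qed
  then obtain p where "\<And>i. i < m \<Longrightarrow> \<omega> (w ! i) \<inter> {q i..<q (Suc i)} = {p i}"
    by metis
  moreover have "\<omega> k \<inter> {q i..<q (Suc i)} = {}" if "i < m" "k \<le> n" "k \<noteq> w ! i" for i k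
    using counts[OF that(1,2)] that(3) by (metis card_0_eq)
  ultimately show ?thesis
    by (intro tasep_phi_single_points[OF partition word, where p = p]) simp
qed

lemma sweep_windows_synchronise:
  assumes partition: "\<forall>i<m. q i < q (Suc i)" and m: "m = n * (n + 1) div 2"
    and finite: "\<forall>(i, k)\<in>{..<m} \<times> {..n}. finite (\<omega> k \<inter> {q i..<q (Suc i)})"
    and counts: "\<forall>(i, k)\<in>{..<m} \<times> {..n}.
                   card (\<omega> k \<inter> {q i..<q (Suc i)}) = (if k = sweep n ! i then 1 else 0)"
  shows "\<omega> \<in> synchronised n (q m) (q 0)"
proof -
  have "tasep_phi n (q m) (q 0) x \<omega> = replicate n True" if "x \<in> tasep_states n" for x
  proof -
    have "set (sweep n) \<subseteq> {..n}" "length (sweep n) = m"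
      using set_sweep[of n] by (auto simp: length_sweep m)
    then have "tasep_phi n (q m) (q 0) x \<omega> = apply_jumps n (sweep n) x"
      by (rule tasep_phi_one_jump_per_window[OF partition]) (use finite counts in auto)
    also have "\<dots> = replicate n True"
      using that by (intro apply_jumps_sweep) (simp_all add: tasep_states_def)
    finally show ?thesis .
  qed
  then show ?thesis
    unfolding synchronised_def by simp
qed

lemma poisson_processes_prob_space:
  "poisson_processes n lam M \<Longrightarrow> prob_space M"
  unfolding poisson_processes_def by (elim conjE)

lemma poisson_processes_AE_finite:
  "poisson_processes n lam M \<Longrightarrow> k \<le> n \<Longrightarrow> AE \<omega> in M. finite (\<omega> k \<inter> {a..<b})"
  unfolding poisson_processes_def by (elim conjE) simp

lemma poisson_processes_count_measurable:
  "poisson_processes n lam M \<Longrightarrow> k \<le> n \<Longrightarrow> a \<le> b \<Longrightarrow>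
     (\<lambda>\<omega>. card (\<omega> k \<inter> {a..<b})) \<in> measurable M (count_space UNIV)"
  unfolding poisson_processes_def by (elim conjE) simp

lemma poisson_processes_prob_count:
  "poisson_processes n lam M \<Longrightarrow> k \<le> n \<Longrightarrow> a \<le> b \<Longrightarrow>
     measure M {\<omega> \<in> space M. card (\<omega> k \<inter> {a..<b}) = j} =
       integral {a..b} (lam k) ^ j / fact j * exp (- integral {a..b} (lam k))"
  unfolding poisson_processes_def by (elim conjE) simp

lemma poisson_processes_indep_counts:
  assumes pp: "poisson_processes n lam M" and "finite J"
    and windows: "\<And>k a b. (k, a, b) \<in> J \<Longrightarrow> k \<le> n \<and> a \<le> b"
    and disjoint: "\<And>k a b a' b'. (k, a, b) \<in> J \<Longrightarrow> (k, a', b') \<in> J \<Longrightarrow>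
           (a, b) \<noteq> (a', b') \<Longrightarrow> {a..<b} \<inter> {a'..<b'} = {}"
  shows "prob_space.indep_vars M (\<lambda>_. count_space UNIV) (\<lambda>(k, a, b) \<omega>. card (\<omega> k \<inter> {a..<b})) J"
proof -
  have indep: "\<forall>J. finite J \<longrightarrow> (\<forall>(k, a, b)\<in>J. k \<le> n \<and> a \<le> b) \<longrightarrow>
      (\<forall>(k, a, b)\<in>J. \<forall>(k', a', b')\<in>J. (k, a, b) \<noteq> (k', a', b') \<longrightarrow> k = k' \<longrightarrow>
         {a..<b} \<inter> {a'..<b'} = {}) \<longrightarrow>
      prob_space.indep_vars M (\<lambda>_. count_space UNIV) (\<lambda>(k, a, b) \<omega>. card (\<omega> k \<inter> {a..<b})) J"
    using pp unfolding poisson_processes_def by (elim conjE) assumption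
  have "\<forall>(k, a, b)\<in>J. k \<le> n \<and> a \<le> b"
    using windows by auto
  moreover have "\<forall>(k, a, b)\<in>J. \<forall>(k', a', b')\<in>J. (k, a, b) \<noteq> (k', a', b') \<longrightarrow> k = k' \<longrightarrow>
                   {a..<b} \<inter> {a'..<b'} = {}"
    using disjoint by fastforce
  ultimately show ?thesis
    using indep \<open>finite J\<close> by simp
qed

lemma poisson_processes_prob_counts:
  fixes proc :: "'i \<Rightarrow> nat" and lo hi :: "'i \<Rightarrow> real" and c :: "'i \<Rightarrow> nat"
  assumes pp: "poisson_processes n lam M" and "finite S"
    and windows: "\<And>x. x \<in> S \<Longrightarrow> proc x \<le> n \<and> lo x < hi x"
    and disjoint: "\<And>x y. x \<in> S \<Longrightarrow> y \<in> S \<Longrightarrow> x \<noteq> y \<Longrightarrow> proc x = proc y \<Longrightarrow>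
                     {lo x..<hi x} \<inter> {lo y..<hi y} = {}"
  shows "measure M {\<omega> \<in> space M. \<forall>x\<in>S. card (\<omega> (proc x) \<inter> {lo x..<hi x}) = c x} =
         (\<Prod>x\<in>S. integral {lo x..hi x} (lam (proc x)) ^ c x / fact (c x)
                   * exp (- integral {lo x..hi x} (lam (proc x))))"
proof -
  interpret prob_space M
    using poisson_processes_prob_space[OF pp] .
  define g where "g x = (proc x, lo x, hi x)" for x
  define X where "X = (\<lambda>(k :: nat, a, b) (\<omega> :: config). card (\<omega> k \<inter> {a..<b :: real}))"
  define A where "A x = X (g x) -` {c x} \<inter> space M" for x
  have A_eq: "A x = {\<omega> \<in> space M. card (\<omega> (proc x) \<inter> {lo x..<hi x}) = c x}" for x
    by (auto simp: A_def X_def g_def)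
  have g_eq: "x = y" if "x \<in> S" "y \<in> S" "g x = g y" for x y
  proof (rule ccontr)
    assume "x \<noteq> y"
    then have "{lo x..<hi x} \<inter> {lo y..<hi y} = {}"
      using disjoint[OF that(1,2) \<open>x \<noteq> y\<close>] that(3) by (simp add: g_def)
    moreover have "lo x \<in> {lo x..<hi x}" "{lo x..<hi x} = {lo y..<hi y}"
      using windows[OF that(1)] that(3) by (auto simp: g_def)
    ultimately show False by blast
  qed
  then have inj: "inj_on g S"
    by (rule inj_onI)
  have indep: "indep_vars (\<lambda>_. count_space UNIV) X (g ` S)"
    unfolding X_def
  proof (rule poisson_processes_indep_counts[OF pp])
    show "finite (g ` S)" using \<open>finite S\<close> by simp
    show "k \<le> n \<and> a \<le> b" if "(k, a, b) \<in> g ` S" for k a b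
      using that windows by (auto simp: g_def less_imp_le)
    show "{a..<b} \<inter> {a'..<b'} = {}"
      if "(k, a, b) \<in> g ` S" "(k, a', b') \<in> g ` S" "(a, b) \<noteq> (a', b')" for k a b a' b'
      using that disjoint by (auto simp: g_def)
  qed
  show ?thesis
  proof (cases "S = {}")
    case True
    then show ?thesis by (simp add: prob_space)
  next
    case False
    let ?B = "\<lambda>y. X y -` {c (inv_into S g y)} \<inter> space M"
    have "prob (\<Inter>y\<in>g ` S. ?B y) = (\<Prod>y\<in>g ` S. prob (?B y))"
      by (rule indep_varsD_finite[OF indep]) (use False \<open>finite S\<close> in auto)
    moreover have "(\<Inter>y\<in>g ` S. ?B y) = (\<Inter>x\<in>S. A x)"
      using inj by (auto simp: A_def)
    moreover have "(\<Prod>y\<in>g ` S. prob (?B y)) = (\<Prod>x\<in>S. prob (A x))"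
      using inj by (simp add: prod.reindex A_def)
    moreover have "(\<Inter>x\<in>S. A x) = {\<omega> \<in> space M. \<forall>x\<in>S. card (\<omega> (proc x) \<inter> {lo x..<hi x}) = c x}"
      using False by (auto simp: A_eq)
    moreover have "prob (A x) = integral {lo x..hi x} (lam (proc x)) ^ c x / fact (c x)
                   * exp (- integral {lo x..hi x} (lam (proc x)))" if "x \<in> S" for x
      unfolding A_eq using poisson_processes_prob_count[OF pp] windows[OF that] by simp
    ultimately show ?thesis
      by simp
  qed
qed

lemma poisson_prob_lower_bound:
  fixes r L R :: real and j :: nat
  assumes "0 < r" "r \<le> L" "L \<le> R" "j \<le> 1"
  shows "min r 1 * exp (- R) \<le> L ^ j / fact j * exp (- L)"
proof (rule mult_mono)
  show "min r 1 \<le> L ^ j / fact j"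
    using assms by (cases "j = 0") (auto simp: le_Suc_eq)
qed (use assms in auto)

lemma partition_counts_event_in_sets:
  assumes pp: "poisson_processes n lam M" and partition: "\<forall>i<m. q i < q (Suc i)"
  shows "{\<omega> \<in> space M. \<forall>(i, k)\<in>{..<m} \<times> {..n}. card (\<omega> k \<inter> {q i..<q (Suc i)}) = c i k} \<in> sets M"
proof (rule sets.sets_Collect_finite_All)
  fix x assume "x \<in> {..<m} \<times> {..n}"
  then obtain i k where x: "x = (i, k)" "i < m" "k \<le> n" by auto
  then have "(\<lambda>\<omega>. card (\<omega> k \<inter> {q i..<q (Suc i)})) \<in> measurable M (count_space UNIV)"
    using poisson_processes_count_measurable[OF pp] partition by (simp add: less_imp_le)
  from measurable_sets[OF this, of "{c i k}"]
  show "{\<omega> \<in> space M. case x of (i, k) \<Rightarrow> card (\<omega> k \<inter> {q i..<q (Suc i)}) = c i k} \<in> sets M"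
    unfolding x by (simp add: vimage_def Int_def conj_commute)
qed simp

lemma AE_obtain_subset:
  assumes "A \<in> sets M" "AE \<omega> in M. P \<omega>"
  obtains E where "E \<in> sets M" "E \<subseteq> {\<omega> \<in> A. P \<omega>}" "measure M E = measure M A"
proof -
  from assms(2) obtain N where N: "{\<omega> \<in> space M. \<not> P \<omega>} \<subseteq> N" "N \<in> null_sets M"
    by (rule AE_E3) auto
  show ?thesis
  proof (rule that)
    show "A - N \<in> sets M"
      using assms(1) N(2) by auto
    show "A - N \<subseteq> {\<omega> \<in> A. P \<omega>}"
      using N(1) sets.sets_into_space[OF assms(1)] by blast
    show "measure M (A - N) = measure M A"
      using assms(1) N(2) by (rule measure_Diff_null_set)
  qed
qed

lemma partition_counts_prob_ge:
  assumes pp: "poisson_processes n lam M"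
    and partition: "\<forall>i<m. q i < q (Suc i)"
    and rates: "\<forall>i<m. \<forall>k\<le>n. r \<le> integral {q i..q (Suc i)} (lam k) \<and>
                               integral {q i..q (Suc i)} (lam k) \<le> R"
    and "0 < r" and c: "\<And>i k. c i k \<le> 1"
  shows "(min r 1 * exp (- R)) ^ (m * (n + 1)) \<le>
         measure M {\<omega> \<in> space M. \<forall>(i, k)\<in>{..<m} \<times> {..n}. card (\<omega> k \<inter> {q i..<q (Suc i)}) = c i k}"
proof -
  let ?S = "{..<m} \<times> {..n}"
  let ?L = "\<lambda>x. integral {q (fst x)..q (Suc (fst x))} (lam (snd x))"
  let ?c = "\<lambda>x. c (fst x) (snd x)"
  have "(min r 1 * exp (- R)) ^ (m * (n + 1)) = (\<Prod>x\<in>?S. min r 1 * exp (- R))"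
    by (simp add: card_cartesian_product)
  also have "\<dots> \<le> (\<Prod>x\<in>?S. ?L x ^ ?c x / fact (?c x) * exp (- ?L x))"
  proof (rule prod_mono)
    fix x assume "x \<in> ?S"
    then show "0 \<le> min r 1 * exp (- R) \<and>
               min r 1 * exp (- R) \<le> ?L x ^ ?c x / fact (?c x) * exp (- ?L x)"
      using poisson_prob_lower_bound[OF \<open>0 < r\<close> _ _ c] rates \<open>0 < r\<close> by auto
  qed
  also have "\<dots> = measure M {\<omega> \<in> space M. \<forall>x\<in>?S.
                     card (\<omega> (snd x) \<inter> {q (fst x)..<q (Suc (fst x))}) = ?c x}"
  proof (rule poisson_processes_prob_counts[OF pp, symmetric])
    show "finite ?S" by simp
    show "snd x \<le> n \<and> q (fst x) < q (Suc (fst x))" if "x \<in> ?S" for x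
      using that partition by auto
    show "{q (fst x)..<q (Suc (fst x))} \<inter> {q (fst y)..<q (Suc (fst y))} = {}"
      if "x \<in> ?S" "y \<in> ?S" "x \<noteq> y" "snd x = snd y" for x y
      using partition_disjoint[OF partition, of "fst x" "fst y"] that by (auto simp: prod_eq_iff)
  qed
  finally show ?thesis
    by (simp add: case_prod_beta)
qed

lemma synchronised_event_prob_ge:
  assumes pp: "poisson_processes n lam M" and m: "m = n * (n + 1) div 2"
    and jb: "joint_bounded_rates n lam r R m t0 t" and "0 < r"
  shows "\<exists>E\<in>sets M. E \<subseteq> synchronised n t t0 \<and> (min r 1 * exp (- R)) ^ (m * (n + 1)) \<le> measure M E"
proof -
  obtain q where q: "q 0 = t0" "q m = t" and partition: "\<forall>i<m. q i < q (Suc i)"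
    and rates: "\<forall>i<m. \<forall>k\<le>n. r \<le> integral {q i..q (Suc i)} (lam k) \<and>
                              integral {q i..q (Suc i)} (lam k) \<le> R"
    using jb unfolding joint_bounded_rates_def by blast
  define A where "A = {\<omega> \<in> space M. \<forall>(i, k)\<in>{..<m} \<times> {..n}.
                        card (\<omega> k \<inter> {q i..<q (Suc i)}) = (if k = sweep n ! i then 1 else 0)}"
  have A: "A \<in> sets M" "(min r 1 * exp (- R)) ^ (m * (n + 1)) \<le> measure M A"
    unfolding A_def
    by (rule partition_counts_event_in_sets[OF pp partition],
        rule partition_counts_prob_ge[OF pp partition rates \<open>0 < r\<close>], simp)
  have "AE \<omega> in M. \<forall>(i, k)\<in>{..<m} \<times> {..n}. finite (\<omega> k \<inter> {q i..<q (Suc i)})"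
    using poisson_processes_AE_finite[OF pp] by (intro AE_finite_allI) auto
  then obtain E where E: "E \<in> sets M" "measure M E = measure M A"
    "E \<subseteq> {\<omega> \<in> A. \<forall>(i, k)\<in>{..<m} \<times> {..n}. finite (\<omega> k \<inter> {q i..<q (Suc i)})}"
    by (rule AE_obtain_subset[OF A(1)])
  moreover have "E \<subseteq> synchronised n t t0"
    using E(3) sweep_windows_synchronise[OF partition m] unfolding A_def q by blast
  ultimately show ?thesis
    using A(2) by auto
qed

theorem lemma12:
  fixes n :: nat and r R :: real
  assumes "0 < r" and "r < R"
  shows "\<exists>\<delta>>0. \<forall>(lam :: nat \<Rightarrow> real \<Rightarrow> real) (M :: config measure) (t0::real) (t::real).
           admissible_rates n lam \<longrightarrow> poisson_processes n lam M \<longrightarrow>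
           joint_bounded_rates n lam r R (n * (n + 1) div 2) t0 t \<longrightarrow>
           (\<exists>E\<in>sets M. E \<subseteq> synchronised n t t0 \<and> measure M E \<ge> \<delta>)"
proof -
  define \<delta> where "\<delta> = (min r 1 * exp (- R)) ^ (n * (n + 1) div 2 * (n + 1))"
  have "0 < \<delta>"
    using assms by (simp add: \<delta>_def)
  moreover have "\<exists>E\<in>sets M. E \<subseteq> synchronised n t t0 \<and> measure M E \<ge> \<delta>"
    if "poisson_processes n lam M" "joint_bounded_rates n lam r R (n * (n + 1) div 2) t0 t"
    for lam M t0 t
    using synchronised_event_prob_ge[OF that(1) refl that(2) \<open>0 < r\<close>] unfolding \<delta>_def .
  ultimately show ?thesis
    by blast
qed

end
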